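(* Let $c_0>0$, $\alpha_0,\tau_0>0$, $\gamma\in(1,2]$, and $$\alpha^*_{ksb}(\omega)=\frac{\alpha_0(-i\omega)}{c_0\sqrt{1+(-i\tau_0\omega)^{\gamma-1}}},\qquad\omega\in\mathbb{R}.$$ Then $K(\vec x,t)=\frac{1}{\sqrt{2\pi}}\mathcal{F}^{-1}\{e^{-\alpha^*_{ksb}(\cdot)|\vec x|}\}(t)$ is causal.
   Context: Fourier convention: $\mathcal{F}^{-1}\{\hat f\}(t)=\frac{1}{\sqrt{2\pi}}\int_{\mathbb{R}}e^{-i\omega t}\hat f(\omega)\,d\omega$ (tempered distributions). Complex powers are principal branch ($w=re^{i\phi}$, $\phi\in(-\pi,\pi)$, $w^\gamma=e^{\gamma(\log r+i\phi)}$); the square root is the complex root with non-negative real part. $K$ is causal if $t\mapsto K(\vec x,t)$ vanishes for $t<0$ for every $\vec x\in\mathbb{R}^3$. *)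

theory Defs
  imports "HOL-Analysis.Analysis"
begin

text \<open>Principal branch complex power
  (Isabelle's powr on complex uses the principal logarithm Ln) and csqrt
  (the square root with non-negative real part).\<close>
definition alpha_ksb :: "real \<Rightarrow> real \<Rightarrow> real \<Rightarrow> real \<Rightarrow> real \<Rightarrow> complex" where
  "alpha_ksb c0 \<alpha>0 \<tau>0 \<gamma> \<omega> =
     (of_real \<alpha>0 * (- \<i> * of_real \<omega>)) /
     (of_real c0 * csqrt (1 + (- \<i> * of_real (\<tau>0 * \<omega>)) powr of_real (\<gamma> - 1)))"

definition smooth_fun :: "(real \<Rightarrow> real) \<Rightarrow> bool" where
  "smooth_fun \<phi> \<longleftrightarrow> (\<forall>k t. ((deriv ^^ k) \<phi>) differentiable (at t))"

definition test_fun_neg :: "(real \<Rightarrow> real) \<Rightarrow> bool" where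
  "test_fun_neg \<phi> \<longleftrightarrow> smooth_fun \<phi> \<and> compact (closure {t. \<phi> t \<noteq> 0})
      \<and> closure {t. \<phi> t \<noteq> 0} \<subseteq> {..<0}"

definition inv_fourier_fun :: "(real \<Rightarrow> real) \<Rightarrow> real \<Rightarrow> complex" where
  "inv_fourier_fun \<phi> \<omega> =
     of_real (1 / sqrt (2 * pi)) * (LINT t|lborel. exp (- \<i> * of_real (\<omega> * t)) * of_real (\<phi> t))"

text \<open>Distributional (transposed) inverse Fourier transform of a locally integrable,
  tempered function g, paired with a test function phi:
  < F^{-1} g, phi > = \<integral> g(omega) (F^{-1} phi)(omega) d omega.\<close>
definition inv_fourier_pair :: "(real \<Rightarrow> complex) \<Rightarrow> (real \<Rightarrow> real) \<Rightarrow> complex" where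
  "inv_fourier_pair g \<phi> = (LINT \<omega>|lborel. g \<omega> * inv_fourier_fun \<phi> \<omega>)"

end

theory Submission
  imports Defs "HOL-Complex_Analysis.Complex_Analysis" "HOL-Probability.Sinc_Integral"
begin

text \<open>Let phi be supported in [a, b] with b < 0. On the real axis its inverse Fourier
  transform is a multiple of the entire function Psi(z) = \<integral>_a^b exp(-izt) phi(t) dt, and two
  integrations by parts give |Psi z| \<le> K exp(b Im z) and |z|^2 |Psi z| \<le> K exp(b Im z) for
  Im z \<ge> 0. Writing s = -iz, the attenuation is a positive multiple of s / sqrt(u) with
  u = 1 + (tau0 s)^(gamma - 1); for Im z \<ge> 0 both s and u lie in the closed right half-plane at an
  angle of at most pi/2 from each other, so Re alpha \<ge> 0 and |exp(-alpha r)| \<le> 1 there, while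
  alpha is continuous on the closed and holomorphic on the open upper half-plane. By Cauchy's
  theorem the integral of exp(-alpha r) Psi over [-R, R] is minus its integral over the other three
  sides of the rectangle [-R, R] x [0, R], which is O(1/R + R exp(bR)) and tends to 0.\<close>

lemma powr_right_half_plane:
  fixes s :: complex and \<beta> :: real
  assumes "0 \<le> Re s" "0 \<le> \<beta>" "\<beta> \<le> 1"
  shows "0 \<le> Re (s powr of_real \<beta>)" "0 \<le> s \<bullet> s powr of_real \<beta>"
proof -
  have "0 \<le> Re (s powr of_real \<beta>) \<and> 0 \<le> s \<bullet> s powr of_real \<beta>"
  proof (cases "s = 0")
    case False
    define \<theta> where "\<theta> = Im (Ln s)"
    define \<rho> where "\<rho> = norm s"
    have \<theta>: "\<bar>\<theta>\<bar> \<le> pi/2" using Re_Ln_pos_le[OF False] assms \<theta>_def by simp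
    have \<rho>: "\<rho> > 0" using False \<rho>_def by simp
    have Re_Ln: "Re (Ln s) = ln \<rho>" using False \<rho>_def by simp
    have s: "s = exp (Ln s)" using False by simp
    have Re_s: "Re s = \<rho> * cos \<theta>" and Im_s: "Im s = \<rho> * sin \<theta>"
      by (subst s, simp add: Re_exp Im_exp Re_Ln \<theta>_def \<rho>)+
    have p: "s powr of_real \<beta> = exp (of_real \<beta> * Ln s)" using False by (simp add: powr_def)
    have Re_p: "Re (s powr of_real \<beta>) = exp (\<beta> * ln \<rho>) * cos (\<beta> * \<theta>)"
      and Im_p: "Im (s powr of_real \<beta>) = exp (\<beta> * ln \<rho>) * sin (\<beta> * \<theta>)"
      by (simp_all add: p Re_exp Im_exp Re_Ln \<theta>_def)
    have "\<theta> - \<beta> * \<theta> = (1 - \<beta>) * \<theta>" by (simp add: algebra_simps)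
    then have "\<bar>\<beta> * \<theta>\<bar> \<le> \<bar>\<theta>\<bar>" "\<bar>\<theta> - \<beta> * \<theta>\<bar> \<le> \<bar>\<theta>\<bar>"
      using assms by (simp_all add: abs_mult mult_left_le_one_le)
    then have "0 \<le> cos (\<beta> * \<theta>)" "0 \<le> cos (\<theta> - \<beta> * \<theta>)"
      using \<theta> by (auto intro!: cos_ge_zero)
    moreover have "s \<bullet> s powr of_real \<beta> = \<rho> * exp (\<beta> * ln \<rho>) * cos (\<theta> - \<beta> * \<theta>)"
      by (simp add: inner_complex_def Re_s Im_s Re_p Im_p cos_diff algebra_simps)
    ultimately show ?thesis using \<rho> by (simp add: Re_p)
  qed simp
  then show "0 \<le> Re (s powr of_real \<beta>)" "0 \<le> s \<bullet> s powr of_real \<beta>" by auto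
qed

lemma Re_divide_csqrt_nonneg:
  fixes s u :: complex
  assumes "0 \<le> Re s" "0 < Re u" "0 \<le> s \<bullet> u"
  shows "0 \<le> Re (s / csqrt u)"
proof -
  define q where "q = csqrt u"
  have u: "u = q * q" unfolding q_def by (metis power2_csqrt power2_eq_square)
  have Re_u: "Re u = Re q ^ 2 - Im q ^ 2" and Im_u: "Im u = 2 * Re q * Im q"
    by (simp_all add: u power2_eq_square)
  have "Re q \<noteq> 0" using assms(2) by (auto simp: Re_u)
  then have q: "0 < Re q" using Re_csqrt q_def by (simp add: order_less_le)
  have "0 \<le> Re s * (Re q ^ 2 + Im q ^ 2) + s \<bullet> u" using assms(1,3) by simp
  also have "\<dots> = 2 * Re q * (s \<bullet> q)"
    by (simp add: inner_complex_def Re_u Im_u power2_eq_square algebra_simps)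
  finally have "0 \<le> s \<bullet> q" using q by (simp add: zero_le_mult_iff)
  then show ?thesis by (simp add: q_def[symmetric] Re_divide inner_complex_def)
qed

lemma minus_i_times_notin_nonpos_Reals:
  fixes w :: complex
  assumes "0 \<le> Im w" "w \<noteq> 0"
  shows "- \<i> * w \<notin> \<real>\<^sub>\<le>\<^sub>0"
  using assms by (auto simp: complex_nonpos_Reals_iff complex_eq_iff)

definition ksb_attenuation :: "real \<Rightarrow> real \<Rightarrow> real \<Rightarrow> real \<Rightarrow> complex \<Rightarrow> complex" where
  "ksb_attenuation c0 \<alpha>0 \<tau>0 \<gamma> z = (of_real \<alpha>0 * (- \<i> * z)) /
     (of_real c0 * csqrt (1 + (- \<i> * (of_real \<tau>0 * z)) powr of_real (\<gamma> - 1)))"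

lemma ksb_attenuation_of_real: "ksb_attenuation c0 \<alpha>0 \<tau>0 \<gamma> (of_real \<omega>) = alpha_ksb c0 \<alpha>0 \<tau>0 \<gamma> \<omega>"
  by (simp add: alpha_ksb_def ksb_attenuation_def)

locale ksb_parameters =
  fixes c0 \<alpha>0 \<tau>0 \<gamma> :: real
  assumes c0_pos: "0 < c0" and \<alpha>0_nonneg: "0 \<le> \<alpha>0" and \<tau>0_pos: "0 < \<tau>0"
    and \<gamma>_ge_1: "1 \<le> \<gamma>" and \<gamma>_le_2: "\<gamma> \<le> 2"
begin

abbreviation alpha :: "complex \<Rightarrow> complex" where
  "alpha \<equiv> ksb_attenuation c0 \<alpha>0 \<tau>0 \<gamma>"

abbreviation radicand :: "complex \<Rightarrow> complex" where
  "radicand z \<equiv> 1 + (- \<i> * (of_real \<tau>0 * z)) powr of_real (\<gamma> - 1)"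

lemma radicand_upper_half_plane:
  assumes "0 \<le> Im z"
  shows "1 \<le> Re (radicand z)" "0 \<le> (- \<i> * z) \<bullet> radicand z"
proof -
  have "0 \<le> Re (- \<i> * (of_real \<tau>0 * z))" using assms \<tau>0_pos by simp
  note p = powr_right_half_plane[OF this, of "\<gamma> - 1"]
  show "1 \<le> Re (radicand z)" using p(1) \<gamma>_ge_1 \<gamma>_le_2 by simp
  have "0 \<le> \<tau>0 * ((- \<i> * z) \<bullet> (- \<i> * (of_real \<tau>0 * z)) powr of_real (\<gamma> - 1))"
    using p(2) \<gamma>_ge_1 \<gamma>_le_2 by (simp add: inner_complex_def algebra_simps)
  then have "0 \<le> (- \<i> * z) \<bullet> (- \<i> * (of_real \<tau>0 * z)) powr of_real (\<gamma> - 1)"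
    using \<tau>0_pos by (simp add: zero_le_mult_iff mult_le_0_iff)
  moreover have "(- \<i> * z) \<bullet> 1 = Im z" by (simp add: inner_complex_def)
  ultimately show "0 \<le> (- \<i> * z) \<bullet> radicand z"
    unfolding inner_add_right using assms by linarith
qed

lemma alpha_eq: "alpha z = (\<alpha>0 / c0) *\<^sub>R ((- \<i> * z) / csqrt (radicand z))"
  by (simp add: ksb_attenuation_def scaleR_conv_of_real)

lemma Re_alpha_nonneg:
  assumes "0 \<le> Im z"
  shows "0 \<le> Re (alpha z)"
proof -
  have "0 \<le> Re ((- \<i> * z) / csqrt (radicand z))"
    using assms radicand_upper_half_plane[OF assms]
    by (intro Re_divide_csqrt_nonneg) auto
  then show ?thesis
    unfolding alpha_eq scaleR_complex.sel(1) using c0_pos \<alpha>0_nonneg by (intro mult_nonneg_nonneg) simp_all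
qed

lemma norm_alpha_le:
  assumes "0 \<le> Im z"
  shows "norm (alpha z) \<le> \<alpha>0 / c0 * norm z"
proof -
  have "1 \<le> norm (radicand z)"
    using radicand_upper_half_plane(1)[OF assms] complex_Re_le_cmod order_trans by blast
  then have "1 \<le> norm (csqrt (radicand z))" by simp
  then have "norm z / norm (csqrt (radicand z)) \<le> norm z / 1"
    by (intro divide_left_mono) auto
  then have "norm ((- \<i> * z) / csqrt (radicand z)) \<le> norm z"
    by (simp add: norm_divide norm_mult del: norm_csqrt)
  then show ?thesis
    unfolding alpha_eq norm_scaleR using c0_pos \<alpha>0_nonneg by (simp add: mult_left_mono divide_right_mono)
qed

lemma alpha_holomorphic: "alpha holomorphic_on {z. 0 \<le> Im z} - {0}"
proof -
  have "- \<i> * (of_real \<tau>0 * z) \<notin> \<real>\<^sub>\<le>\<^sub>0" if "z \<in> {z. 0 \<le> Im z} - {0}" for z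
    using that \<tau>0_pos by (intro minus_i_times_notin_nonpos_Reals) auto
  moreover have "radicand z \<notin> \<real>\<^sub>\<le>\<^sub>0" if "z \<in> {z. 0 \<le> Im z} - {0}" for z
    using that radicand_upper_half_plane(1)[of z] by (auto simp: complex_nonpos_Reals_iff)
  moreover have "csqrt w \<noteq> 0" if "w \<notin> \<real>\<^sub>\<le>\<^sub>0" for w
    using that by auto
  ultimately show ?thesis
    unfolding ksb_attenuation_def using c0_pos
    by (intro holomorphic_intros) auto
qed

lemma alpha_continuous_on: "continuous_on {z. 0 \<le> Im z} alpha"
  unfolding continuous_on_eq_continuous_within
proof
  fix z :: complex assume z: "z \<in> {z. 0 \<le> Im z}"
  show "continuous (at z within {z. 0 \<le> Im z}) alpha"
  proof (cases "z = 0")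
    case False
    have "continuous (at z within {z. 0 \<le> Im z} - {0}) alpha"
      using alpha_holomorphic holomorphic_on_imp_continuous_on z False
      by (simp add: continuous_on_eq_continuous_within)
    moreover have "at z within {z. 0 \<le> Im z} - {0} = at z within {z. 0 \<le> Im z}"
      using False by (intro at_within_nhd[of _ "- {0}"]) auto
    ultimately show ?thesis by simp
  next
    case True
    have "\<forall>\<^sub>F w in at 0 within {z. 0 \<le> Im z}. norm (alpha w) \<le> \<alpha>0 / c0 * norm w"
      using norm_alpha_le by (auto simp: eventually_at_filter)
    moreover have "((\<lambda>w. \<alpha>0 / c0 * norm w) \<longlongrightarrow> 0) (at 0 within {z. 0 \<le> Im z})"
      by (intro tendsto_mult_right_zero tendsto_norm_zero tendsto_ident_at)
    ultimately show ?thesis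
      using True by (simp add: continuous_within Lim_null_comparison ksb_attenuation_def)
  qed
qed

end

definition fourier_laplace :: "(real \<Rightarrow> real) \<Rightarrow> real \<Rightarrow> real \<Rightarrow> complex \<Rightarrow> complex" where
  "fourier_laplace \<phi> a b z = integral {a..b} (\<lambda>t. exp (- \<i> * (z * of_real t)) * of_real (\<phi> t))"

lemma norm_exp_minus_i_times: "norm (exp (- \<i> * (z * of_real t))) = exp (t * Im z)"
  by (simp add: mult.commute)

lemma norm_integral_exp_kernel_le:
  assumes "continuous_on {a..b} g" "a \<le> b" "\<And>t. t \<in> {a..b} \<Longrightarrow> \<bar>g t\<bar> \<le> M" "0 \<le> Im z"
  shows "norm (integral {a..b} (\<lambda>t. exp (- \<i> * (z * of_real t)) * of_real (g t)))
           \<le> M * exp (b * Im z) * (b - a)"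
proof -
  have "continuous_on {a..b} (\<lambda>t. exp (- \<i> * (z * of_real t)) * of_real (g t))"
    using assms(1) by (intro continuous_intros)
  then have integral: "((\<lambda>t. exp (- \<i> * (z * of_real t)) * of_real (g t)) has_integral
      integral {a..b} (\<lambda>t. exp (- \<i> * (z * of_real t)) * of_real (g t))) {a..b}"
    by (intro integrable_integral integrable_continuous_real)
  have "norm (integral {a..b} (\<lambda>t. exp (- \<i> * (z * of_real t)) * of_real (g t)))
      \<le> exp (b * Im z) * M * measure lborel {a..b}"
  proof (rule has_integral_bound_real[OF _ finite.emptyI integral])
    show "0 \<le> exp (b * Im z) * M" using assms(2) assms(3)[of a] by simp
    fix t assume t: "t \<in> {a..b} - {}"
    have "norm (exp (- \<i> * (z * of_real t)) * of_real (g t)) = exp (t * Im z) * \<bar>g t\<bar>"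
      by (simp only: norm_mult norm_exp_minus_i_times norm_of_real)
    also have "\<dots> \<le> exp (b * Im z) * M"
      using t assms(3)[of t] assms(4) by (intro mult_mono) (auto simp: mult_right_mono)
    finally show "norm (exp (- \<i> * (z * of_real t)) * of_real (g t)) \<le> exp (b * Im z) * M" .
  qed
  then show ?thesis using assms(2) by (simp add: mult_ac)
qed

lemma fourier_laplace_holomorphic:
  assumes "continuous_on {a..b} \<phi>"
  shows "fourier_laplace \<phi> a b holomorphic_on UNIV"
proof -
  have "((\<lambda>z. integral (cbox a b) (\<lambda>t. exp (- \<i> * (z * of_real t)) * of_real (\<phi> t)))
      has_field_derivative
        integral (cbox a b) (\<lambda>t. - \<i> * of_real t * exp (- \<i> * (z * of_real t)) * of_real (\<phi> t)))
      (at z within UNIV)" for z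
  proof (rule leibniz_rule_field_derivative)
    show "continuous_on (UNIV \<times> cbox a b)
        (\<lambda>(z, t). - \<i> * of_real t * exp (- \<i> * (z * of_real t)) * of_real (\<phi> t))"
      using assms unfolding case_prod_beta cbox_interval
      by (intro continuous_intros continuous_on_compose2[OF assms continuous_on_snd]) auto
  qed (use assms in \<open>auto intro!: derivative_eq_intros integrable_continuous_real continuous_intros
          simp: algebra_simps\<close>)
  then show ?thesis
    unfolding holomorphic_on_def field_differentiable_def fourier_laplace_def
    by (auto intro: has_field_derivative_at_within)
qed

lemma fourier_laplace_second_derivative:
  assumes "a \<le> b"
    and \<phi>': "\<And>t. (\<phi> has_real_derivative \<phi>' t) (at t)"
    and \<phi>'': "\<And>t. (\<phi>' has_real_derivative \<phi>'' t) (at t)"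
    and "continuous_on {a..b} \<phi>''"
    and "\<phi> a = 0" "\<phi>' a = 0" "\<phi> b = 0" "\<phi>' b = 0"
  shows "z\<^sup>2 * fourier_laplace \<phi> a b z = - fourier_laplace \<phi>'' a b z"
proof -
  define E where "E t = exp (- \<i> * (z * of_real t))" for t
  define G where "G t = E t * (of_real (\<phi>' t) + \<i> * z * of_real (\<phi> t))" for t
  have "continuous_on {a..b} \<phi>"
    using \<phi>' by (intro continuous_at_imp_continuous_on ballI DERIV_isCont)
  then have int\<phi>: "(\<lambda>t. E t * of_real (\<phi> t)) integrable_on {a..b}"
    unfolding E_def by (intro integrable_continuous_real continuous_intros)
  have int\<phi>'': "(\<lambda>t. E t * of_real (\<phi>'' t)) integrable_on {a..b}"
    unfolding E_def using assms(4) by (intro integrable_continuous_real continuous_intros)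
  have "((\<lambda>t. z\<^sup>2 * (E t * of_real (\<phi> t)) + E t * of_real (\<phi>'' t)) has_integral (G b - G a)) {a..b}"
  proof (rule fundamental_theorem_of_calculus[OF assms(1)])
    fix t assume "t \<in> {a..b}"
    have "((\<lambda>w. exp (- \<i> * (z * w))) has_field_derivative E t * (- \<i> * z)) (at (of_real t))"
      unfolding E_def by (auto intro!: derivative_eq_intros)
    then have "(E has_vector_derivative E t * (- \<i> * z)) (at t within {a..b})"
      unfolding E_def by (rule has_vector_derivative_real_field)
    moreover have "((\<lambda>t. of_real (\<phi>' t) + \<i> * z * of_real (\<phi> t)) has_vector_derivative
        (of_real (\<phi>'' t) + \<i> * z * of_real (\<phi>' t))) (at t within {a..b})"
      by (intro has_vector_derivative_add has_vector_derivative_mult_right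
          has_vector_derivative_of_real[OF has_field_derivative_at_within[OF \<phi>']]
          has_vector_derivative_of_real[OF has_field_derivative_at_within[OF \<phi>'']])
    ultimately have "(G has_vector_derivative E t * (of_real (\<phi>'' t) + \<i> * z * of_real (\<phi>' t)) +
        E t * (- \<i> * z) * (of_real (\<phi>' t) + \<i> * z * of_real (\<phi> t))) (at t within {a..b})"
      unfolding G_def by (rule has_vector_derivative_mult)
    then show "(G has_vector_derivative z\<^sup>2 * (E t * of_real (\<phi> t)) + E t * of_real (\<phi>'' t))
        (at t within {a..b})"
      by (rule has_vector_derivative_eq_rhs) (simp add: algebra_simps power2_eq_square)
  qed
  moreover have "G b - G a = 0" using assms(5-8) by (simp add: G_def)
  ultimately have "integral {a..b} (\<lambda>t. z\<^sup>2 * (E t * of_real (\<phi> t)) + E t * of_real (\<phi>'' t)) = 0"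
    by (simp add: integral_unique)
  then show ?thesis
    using int\<phi> int\<phi>'' unfolding fourier_laplace_def E_def[symmetric]
    by (simp add: integral_add integrable_on_mult_right eq_neg_iff_add_eq_0)
qed

lemma fourier_laplace_decay:
  assumes "a \<le> b"
    and "\<And>t. (\<phi> has_real_derivative \<phi>' t) (at t)"
    and "\<And>t. (\<phi>' has_real_derivative \<phi>'' t) (at t)"
    and "continuous_on {a..b} \<phi>''"
    and "\<phi> a = 0" "\<phi>' a = 0" "\<phi> b = 0" "\<phi>' b = 0"
  obtains K where "\<And>z. 0 \<le> Im z \<Longrightarrow> norm (fourier_laplace \<phi> a b z) \<le> K * exp (b * Im z)"
    and "\<And>z. 0 \<le> Im z \<Longrightarrow> (norm z)\<^sup>2 * norm (fourier_laplace \<phi> a b z) \<le> K * exp (b * Im z)"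
proof -
  have "continuous_on {a..b} \<phi>"
    using assms(2) by (intro continuous_at_imp_continuous_on ballI DERIV_isCont)
  then have "continuous_on {a..b} (\<lambda>t. \<bar>\<phi> t\<bar> + \<bar>\<phi>'' t\<bar>)"
    using assms(4) by (intro continuous_intros)
  then have "bounded ((\<lambda>t. \<bar>\<phi> t\<bar> + \<bar>\<phi>'' t\<bar>) ` {a..b})"
    by (intro compact_imp_bounded compact_continuous_image compact_Icc)
  then obtain M where "\<forall>y \<in> (\<lambda>t. \<bar>\<phi> t\<bar> + \<bar>\<phi>'' t\<bar>) ` {a..b}. norm y \<le> M"
    unfolding bounded_iff by blast
  then have M: "\<bar>\<phi> t\<bar> \<le> M" "\<bar>\<phi>'' t\<bar> \<le> M" if "t \<in> {a..b}" for t
    using that abs_ge_zero[of "\<phi> t"] abs_ge_zero[of "\<phi>'' t"] by force+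
  have "norm (fourier_laplace \<phi> a b z) \<le> M * exp (b * Im z) * (b - a)" if "0 \<le> Im z" for z
    unfolding fourier_laplace_def using \<open>continuous_on {a..b} \<phi>\<close> assms(1) M that
    by (intro norm_integral_exp_kernel_le) auto
  moreover have "(norm z)\<^sup>2 * norm (fourier_laplace \<phi> a b z) \<le> M * exp (b * Im z) * (b - a)"
    if "0 \<le> Im z" for z
  proof -
    have "(norm z)\<^sup>2 * norm (fourier_laplace \<phi> a b z) = norm (fourier_laplace \<phi>'' a b z)"
      using fourier_laplace_second_derivative[OF assms, of z] by (metis norm_minus_cancel norm_mult norm_power)
    also have "\<dots> \<le> M * exp (b * Im z) * (b - a)"
      unfolding fourier_laplace_def using assms(1,4) M that
      by (intro norm_integral_exp_kernel_le) auto
    finally show ?thesis .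
  qed
  ultimately show ?thesis by (intro that[of "M * (b - a)"]) (simp_all add: mult_ac)
qed

lemma quadrilateral_contour_integral_eq_0:
  assumes "convex S" "continuous_on S h" "\<And>z. z \<in> interior S \<Longrightarrow> h field_differentiable at z"
    and "A \<in> S" "B \<in> S" "C \<in> S" "D \<in> S"
  shows "contour_integral (linepath A B) h + contour_integral (linepath B C) h
       + contour_integral (linepath C D) h + contour_integral (linepath D A) h = 0"
proof -
  have integrable: "h contour_integrable_on linepath P Q" if "P \<in> S" "Q \<in> S" for P Q
    using closed_segment_subset[OF that \<open>convex S\<close>]
    by (intro contour_integrable_continuous_linepath continuous_on_subset[OF assms(2)])
  define g where "g = linepath A B +++ linepath B C +++ linepath C D +++ linepath D A"
  have zero: "(h has_contour_integral 0) g"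
  proof (rule Cauchy_theorem_convex[OF assms(2,1) finite.emptyI])
    show "path_image g \<subseteq> S"
      using closed_segment_subset[OF _ _ assms(1)] assms(4-7) by (simp add: g_def path_image_join)
    show "valid_path g" unfolding g_def by (intro valid_path_join valid_path_linepath) simp_all
    show "pathfinish g = pathstart g" by (simp add: g_def)
  qed (use assms(3) in blast)
  have sum: "(h has_contour_integral contour_integral (linepath A B) h + (contour_integral (linepath B C) h
      + (contour_integral (linepath C D) h + contour_integral (linepath D A) h))) g"
    unfolding g_def using assms(4-7)
    by (intro has_contour_integral_join has_contour_integral_integral integrable
        valid_path_join valid_path_linepath) simp_all
  show ?thesis using has_contour_integral_unique[OF sum zero] by (simp add: add.assoc)
qed

lemma interior_closed_upper_half_plane: "interior {z. 0 \<le> Im z} = {z. 0 < Im z}"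
proof -
  have "interior {z. \<i> \<bullet> z \<ge> 0} = {z. \<i> \<bullet> z > 0}"
    by (rule interior_halfspace_ge) simp
  then show ?thesis by (simp add: inner_complex_def)
qed

lemma norm_contour_integral_vertical_le:
  fixes h :: "complex \<Rightarrow> complex"
  assumes cont: "continuous_on {z. 0 \<le> Im z} h"
    and decay: "\<And>z. 0 \<le> Im z \<Longrightarrow> (norm z)\<^sup>2 * norm (h z) \<le> K"
    and "0 < R" "\<bar>x\<bar> = R" "0 \<le> y" "0 \<le> y'"
  shows "norm (contour_integral (linepath (Complex x y) (Complex x y')) h) \<le> K / R\<^sup>2 * \<bar>y' - y\<bar>"
proof -
  have K: "0 \<le> K" using decay[of 0] by simp
  have segment: "0 \<le> Im z \<and> R \<le> norm z" if "z \<in> closed_segment (Complex x y) (Complex x y')" for z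
    using that assms(4-6) abs_Re_le_cmod[of z]
    by (auto simp: closed_segment_same_Re closed_segment_eq_real_ivl split: if_splits)
  have "norm (h z) \<le> K / R\<^sup>2" if "z \<in> closed_segment (Complex x y) (Complex x y')" for z
  proof -
    have "R\<^sup>2 \<le> (norm z)\<^sup>2" using segment[OF that] assms(3) by (intro power_mono) auto
    then have "R\<^sup>2 * norm (h z) \<le> K"
      using decay segment[OF that] by (meson mult_right_mono norm_ge_zero order_trans)
    then show ?thesis using assms(3) by (simp add: field_simps)
  qed
  moreover have "h contour_integrable_on linepath (Complex x y) (Complex x y')"
    using segment by (intro contour_integrable_continuous_linepath continuous_on_subset[OF cont]) auto
  ultimately have "norm (contour_integral (linepath (Complex x y) (Complex x y')) h)
      \<le> K / R\<^sup>2 * norm (Complex x y' - Complex x y)"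
    using K by (intro contour_integral_bound_linepath) auto
  then show ?thesis by (simp add: norm_complex_def)
qed

lemma norm_contour_integral_horizontal_le:
  fixes h :: "complex \<Rightarrow> complex"
  assumes cont: "continuous_on {z. 0 \<le> Im z} h"
    and bound: "\<And>z. 0 \<le> Im z \<Longrightarrow> norm (h z) \<le> K * exp (b * Im z)"
    and "0 < R"
  shows "norm (contour_integral (linepath (Complex R R) (Complex (-R) R)) h) \<le> K * exp (b * R) * (2 * R)"
proof -
  have segment: "Im z = R" if "z \<in> closed_segment (Complex R R) (Complex (-R) R)" for z
    using that by (simp add: closed_segment_same_Im)
  have "0 \<le> K" using order_trans[OF norm_ge_zero bound[of 0]] by simp
  moreover have "h contour_integrable_on linepath (Complex R R) (Complex (-R) R)"
    using segment assms(3)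
    by (intro contour_integrable_continuous_linepath continuous_on_subset[OF cont]) auto
  moreover have "norm (h z) \<le> K * exp (b * R)"
    if "z \<in> closed_segment (Complex R R) (Complex (-R) R)" for z
    using bound[of z] segment[OF that] assms(3) by simp
  ultimately have "norm (contour_integral (linepath (Complex R R) (Complex (-R) R)) h)
      \<le> K * exp (b * R) * norm (Complex (-R) R - Complex R R)"
    by (intro contour_integral_bound_linepath) auto
  then show ?thesis using assms(3) by (simp add: norm_complex_def real_sqrt_mult)
qed

lemma norm_integral_upper_rectangle_le:
  fixes h :: "complex \<Rightarrow> complex"
  assumes cont: "continuous_on {z. 0 \<le> Im z} h" and holo: "h holomorphic_on {z. 0 < Im z}"
    and bound: "\<And>z. 0 \<le> Im z \<Longrightarrow> norm (h z) \<le> K * exp (b * Im z)"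
    and decay: "\<And>z. 0 \<le> Im z \<Longrightarrow> (norm z)\<^sup>2 * norm (h z) \<le> K"
    and R: "0 < R"
  shows "norm (integral {-R..R} (\<lambda>x. h (of_real x))) \<le> 2 * K / R + 2 * K * R * exp (b * R)"
proof -
  define I where "I P Q = contour_integral (linepath P Q) h" for P Q
  define J where "J = integral {-R..R} (\<lambda>x. h (of_real x))"
  define I\<^sub>1 I\<^sub>2 I\<^sub>3 where "I\<^sub>1 = I (Complex R 0) (Complex R R)"
    and "I\<^sub>2 = I (Complex R R) (Complex (-R) R)" and "I\<^sub>3 = I (Complex (-R) R) (Complex (-R) 0)"
  have "J = I (Complex (-R) 0) (Complex R 0)"
    unfolding I_def J_def using R
    by (subst contour_integral_linepath_Reals_eq) (auto simp: complex_is_Real_iff)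
  moreover have "I (Complex (-R) 0) (Complex R 0) + I\<^sub>1 + I\<^sub>2 + I\<^sub>3 = 0"
    unfolding I_def I\<^sub>1_def I\<^sub>2_def I\<^sub>3_def
  proof (rule quadrilateral_contour_integral_eq_0[OF convex_halfspace_Im_ge cont])
    show "h field_differentiable at z" if "z \<in> interior {z. 0 \<le> Im z}" for z
      using that holomorphic_on_imp_differentiable_at[OF holo open_halfspace_Im_gt]
      by (simp add: interior_closed_upper_half_plane)
  qed (use R in simp_all)
  ultimately have "J = - (I\<^sub>1 + I\<^sub>2 + I\<^sub>3)" by (simp only: eq_neg_iff_add_eq_0 add.assoc)
  then have "norm J \<le> norm I\<^sub>1 + norm I\<^sub>2 + norm I\<^sub>3"
    using norm_triangle_ineq[of "I\<^sub>1 + I\<^sub>2" I\<^sub>3] norm_triangle_ineq[of I\<^sub>1 I\<^sub>2]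
    by (simp only: norm_minus_cancel)
  moreover have "norm I\<^sub>1 \<le> K / R\<^sup>2 * R" "norm I\<^sub>3 \<le> K / R\<^sup>2 * R"
    using norm_contour_integral_vertical_le[OF cont decay R, of R 0 R]
      norm_contour_integral_vertical_le[OF cont decay R, of "-R" R 0] R
    by (simp_all add: I_def I\<^sub>1_def I\<^sub>3_def)
  moreover have "norm I\<^sub>2 \<le> K * exp (b * R) * (2 * R)"
    unfolding I\<^sub>2_def I_def by (rule norm_contour_integral_horizontal_le[OF cont bound R])
  moreover have "K / R\<^sup>2 * R = K / R" "2 * K / R = K / R + K / R"
    "K * exp (b * R) * (2 * R) = 2 * K * R * exp (b * R)"
    using R by (simp_all add: power2_eq_square)
  ultimately show ?thesis unfolding J_def by linarith
qed

lemma tendsto_times_exp_at_top: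
  fixes b :: real
  assumes "b < 0"
  shows "((\<lambda>R. R * exp (b * R)) \<longlongrightarrow> 0) at_top"
proof -
  have "filterlim (\<lambda>R. - b * R) at_top at_top"
    using assms by (intro filterlim_tendsto_pos_mult_at_top[OF tendsto_const _ filterlim_ident]) simp
  from filterlim_compose[OF tendsto_power_div_exp_0[of 1] this]
  have "((\<lambda>R. - b * R / exp (- b * R)) \<longlongrightarrow> 0) at_top" by simp
  then have "((\<lambda>R. inverse (- b) * (- b * R / exp (- b * R))) \<longlongrightarrow> inverse (- b) * 0) at_top"
    by (rule tendsto_mult_left)
  moreover have "inverse (- b) * (- b * R / exp (- b * R)) = R * exp (b * R)" for R
    using assms by (simp add: exp_minus field_simps)
  ultimately show ?thesis by simp
qed

lemma tendsto_integral_symmetric_interval: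
  fixes f :: "real \<Rightarrow> 'a::euclidean_space"
  assumes "integrable lborel f"
  shows "((\<lambda>R. integral {-R..R} f) \<longlongrightarrow> integral\<^sup>L lborel f) at_top"
proof -
  have "((\<lambda>R. LINT x|lborel. indicator {-R..R} x *\<^sub>R f x) \<longlongrightarrow> integral\<^sup>L lborel f) at_top"
  proof (rule integral_dominated_convergence_at_top[where w="\<lambda>x. norm (f x)"])
    show "f \<in> borel_measurable lborel" "integrable lborel (\<lambda>x. norm (f x))" using assms by simp_all
    then show "(\<lambda>x. indicator {-R..R} x *\<^sub>R f x) \<in> borel_measurable lborel" for R by measurable
    show "\<forall>\<^sub>F R in at_top. AE x in lborel. norm (indicator {-R..R} x *\<^sub>R f x) \<le> norm (f x)"
      by (simp add: indicator_def)
    show "AE x in lborel. ((\<lambda>R. indicator {-R..R} x *\<^sub>R f x) \<longlongrightarrow> f x) at_top"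
    proof (rule AE_I2, rule tendsto_eventually)
      show "\<forall>\<^sub>F R in at_top. indicator {-R..R} x *\<^sub>R f x = f x" for x
        using eventually_ge_at_top[of "\<bar>x\<bar>"] by eventually_elim (auto simp: indicator_def)
    qed
  qed
  moreover have "(LINT x|lborel. indicator {-R..R} x *\<^sub>R f x) = integral {-R..R} f" for R
    using set_borel_integral_eq_integral(2)[of "{-R..R}" f] assms
    by (simp add: set_integrable_def set_lebesgue_integral_def integrable_mult_indicator)
  ultimately show ?thesis by simp
qed

lemma upper_half_plane_integral_eq_0:
  fixes h :: "complex \<Rightarrow> complex"
  assumes cont: "continuous_on {z. 0 \<le> Im z} h" and holo: "h holomorphic_on {z. 0 < Im z}"
    and "b < 0"
    and bound: "\<And>z. 0 \<le> Im z \<Longrightarrow> norm (h z) \<le> K * exp (b * Im z)"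
    and decay: "\<And>z. 0 \<le> Im z \<Longrightarrow> (norm z)\<^sup>2 * norm (h z) \<le> K"
  shows "integrable lborel (\<lambda>x. h (of_real x))" "(LINT x|lborel. h (of_real x)) = 0"
proof -
  have K: "0 \<le> K" using decay[of 0] by simp
  have dominated: "norm (h (of_real x)) \<le> norm (2 * K * inverse (1 + x\<^sup>2))" for x
  proof -
    have "norm (h (of_real x)) \<le> K" "x\<^sup>2 * norm (h (of_real x)) \<le> K"
      using bound[of "of_real x"] decay[of "of_real x"] by simp_all
    then have "(1 + x\<^sup>2) * norm (h (of_real x)) \<le> 2 * K" by (simp add: algebra_simps)
    then show ?thesis using K by (simp add: field_simps add_pos_nonneg)
  qed
  have dominant: "integrable lborel (\<lambda>x::real. 2 * K * inverse (1 + x\<^sup>2))"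
    using integrable_inverse_1_plus_square by (simp add: set_integrable_def einterval_def)
  have "continuous_on UNIV (\<lambda>x. h (of_real x))"
    by (rule continuous_on_compose2[OF cont continuous_on_of_real]) auto
  then have "(\<lambda>x. h (of_real x)) \<in> borel_measurable lborel"
    by (simp add: borel_measurable_continuous_onI)
  then show integrable: "integrable lborel (\<lambda>x. h (of_real x))"
    using dominated by (intro Bochner_Integration.integrable_bound[OF dominant]) simp_all
  have "\<forall>\<^sub>F R in at_top. norm (integral {-R..R} (\<lambda>x. h (of_real x))) \<le> 2 * K / R + 2 * K * R * exp (b * R)"
    using eventually_gt_at_top[of 0]
    by eventually_elim (rule norm_integral_upper_rectangle_le[OF cont holo bound decay])
  moreover have "((\<lambda>R. 2 * K / R + 2 * K * R * exp (b * R)) \<longlongrightarrow> 0) at_top"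
    using tendsto_mult_left[OF tendsto_times_exp_at_top[OF \<open>b < 0\<close>], of "2 * K"]
    by (intro tendsto_add_zero tendsto_divide_0[OF tendsto_const]
        filterlim_at_top_imp_at_infinity[OF filterlim_ident]) (simp_all add: mult_ac)
  ultimately have "((\<lambda>R. integral {-R..R} (\<lambda>x. h (of_real x))) \<longlongrightarrow> 0) at_top"
    by (rule Lim_null_comparison)
  from tendsto_unique[OF _ tendsto_integral_symmetric_interval[OF integrable] this]
  show "(LINT x|lborel. h (of_real x)) = 0" by simp
qed

lemma bounded_times_fourier_laplace_integral_eq_0:
  fixes F :: "complex \<Rightarrow> complex"
  assumes "continuous_on {z. 0 \<le> Im z} F" "F holomorphic_on {z. 0 < Im z}"
    and "\<And>z. 0 \<le> Im z \<Longrightarrow> norm (F z) \<le> 1"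
    and "a \<le> b" "b < 0"
    and "\<And>t. (\<phi> has_real_derivative \<phi>' t) (at t)"
    and "\<And>t. (\<phi>' has_real_derivative \<phi>'' t) (at t)"
    and "continuous_on {a..b} \<phi>''"
    and "\<phi> a = 0" "\<phi>' a = 0" "\<phi> b = 0" "\<phi>' b = 0"
  shows "integrable lborel (\<lambda>\<omega>. F (of_real \<omega>) * fourier_laplace \<phi> a b (of_real \<omega>))"
    and "(LINT \<omega>|lborel. F (of_real \<omega>) * fourier_laplace \<phi> a b (of_real \<omega>)) = 0"
proof -
  obtain K where bound: "\<And>z. 0 \<le> Im z \<Longrightarrow> norm (fourier_laplace \<phi> a b z) \<le> K * exp (b * Im z)"
    and decay: "\<And>z. 0 \<le> Im z \<Longrightarrow> (norm z)\<^sup>2 * norm (fourier_laplace \<phi> a b z) \<le> K * exp (b * Im z)"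
    using fourier_laplace_decay[OF assms(4,6-12)] by blast
  have "continuous_on {a..b} \<phi>"
    using assms(6) by (intro continuous_at_imp_continuous_on ballI DERIV_isCont)
  then have holo: "fourier_laplace \<phi> a b holomorphic_on UNIV"
    by (rule fourier_laplace_holomorphic)
  have K: "0 \<le> K" using decay[of 0] by simp
  have F_le: "norm (F z * fourier_laplace \<phi> a b z) \<le> norm (fourier_laplace \<phi> a b z)"
    if "0 \<le> Im z" for z
    using assms(3)[OF that] by (simp add: norm_mult mult_left_le_one_le)
  have "continuous_on {z. 0 \<le> Im z} (\<lambda>z. F z * fourier_laplace \<phi> a b z)"
    using assms(1) holomorphic_on_imp_continuous_on[OF holo]
    by (intro continuous_intros) (auto intro: continuous_on_subset)
  moreover have "(\<lambda>z. F z * fourier_laplace \<phi> a b z) holomorphic_on {z. 0 < Im z}"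
    using holomorphic_on_subset[OF holo] by (intro holomorphic_intros assms(2)) auto
  moreover have "norm (F z * fourier_laplace \<phi> a b z) \<le> K * exp (b * Im z)" if "0 \<le> Im z" for z
    using F_le[OF that] bound[OF that] by linarith
  moreover have "(norm z)\<^sup>2 * norm (F z * fourier_laplace \<phi> a b z) \<le> K" if "0 \<le> Im z" for z
  proof -
    have "(norm z)\<^sup>2 * norm (F z * fourier_laplace \<phi> a b z) \<le> K * exp (b * Im z)"
      using mult_left_mono[OF F_le[OF that], of "(norm z)\<^sup>2"] decay[OF that] by simp
    also have "\<dots> \<le> K"
      using K assms(5) that by (intro mult_right_le_one_le) (simp_all add: mult_nonpos_nonneg)
    finally show ?thesis .
  qed
  ultimately show "integrable lborel (\<lambda>\<omega>. F (of_real \<omega>) * fourier_laplace \<phi> a b (of_real \<omega>))"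
    and "(LINT \<omega>|lborel. F (of_real \<omega>) * fourier_laplace \<phi> a b (of_real \<omega>)) = 0"
    using upper_half_plane_integral_eq_0[OF _ _ assms(5)] by blast+
qed

lemma test_fun_neg_support:
  assumes "test_fun_neg \<phi>"
  obtains a b where "a < b" "b < 0" "\<And>t. t \<le> a \<or> b \<le> t \<Longrightarrow> \<phi> t = 0 \<and> deriv \<phi> t = 0"
proof -
  define S where "S = closure {t. \<phi> t \<noteq> 0}"
  have S: "compact S" "S \<subseteq> {..<0}" using assms by (auto simp: test_fun_neg_def S_def)
  obtain b0 where b0: "b0 < 0" "S \<subseteq> {..b0}"
  proof (cases "S = {}")
    case True
    then show ?thesis using that[of "-1"] by simp
  next
    case False
    then obtain m where "m \<in> S" "\<forall>t\<in>S. t \<le> m" using compact_attains_sup[OF S(1)] by blast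
    then show ?thesis using that[of m] S(2) by auto
  qed
  obtain B where B: "\<forall>t\<in>S. \<bar>t\<bar> \<le> B" using compact_imp_bounded[OF S(1)] bounded_real by blast
  have "S \<subseteq> {-B..b0}"
  proof
    fix t assume "t \<in> S"
    then show "t \<in> {-B..b0}" using B b0(2) by (auto simp: abs_le_iff)
  qed
  define U where "U = - {-B..b0}"
  have "open U" unfolding U_def by (intro open_Compl closed_atLeastAtMost)
  have zero: "\<phi> t = 0" if "t \<in> U" for t
    using that \<open>S \<subseteq> {-B..b0}\<close> closure_subset[of "{t. \<phi> t \<noteq> 0}"] unfolding U_def S_def by blast
  show ?thesis
  proof (rule that)
    show "min (-B) b0 - 1 < b0 / 2" "b0 / 2 < 0" using b0(1) by auto
    fix t assume "t \<le> min (-B) b0 - 1 \<or> b0 / 2 \<le> t"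
    then have "t \<in> U" using b0(1) by (auto simp: U_def)
    then have "(\<phi> has_real_derivative 0) (at t)"
      using has_field_derivative_transform_within_open[OF DERIV_const \<open>open U\<close>] zero by simp
    then show "\<phi> t = 0 \<and> deriv \<phi> t = 0" using zero[OF \<open>t \<in> U\<close>] DERIV_imp_deriv by blast
  qed
qed

lemma smooth_fun_derivatives:
  assumes "smooth_fun \<phi>"
  shows "(\<phi> has_real_derivative deriv \<phi> t) (at t)"
    and "(deriv \<phi> has_real_derivative deriv (deriv \<phi>) t) (at t)"
    and "continuous_on A (deriv (deriv \<phi>))"
proof -
  have differentiable: "(deriv ^^ k) \<phi> differentiable (at t)" for k t
    using assms by (simp add: smooth_fun_def)
  show "(\<phi> has_real_derivative deriv \<phi> t) (at t)"
    using differentiable[of 0] by (simp add: DERIV_deriv_iff_real_differentiable)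
  show "(deriv \<phi> has_real_derivative deriv (deriv \<phi>) t) (at t)"
    using differentiable[of 1] by (simp add: DERIV_deriv_iff_real_differentiable)
  have "deriv (deriv \<phi>) differentiable (at t)" for t
    using differentiable[of 2] by (simp add: numeral_2_eq_2)
  then show "continuous_on A (deriv (deriv \<phi>))"
    by (intro continuous_at_imp_continuous_on ballI differentiable_imp_continuous_within)
qed

lemma inv_fourier_fun_eq_fourier_laplace:
  assumes "continuous_on {a..b} \<phi>" "\<And>t. t \<notin> {a..b} \<Longrightarrow> \<phi> t = 0"
  shows "inv_fourier_fun \<phi> \<omega> = of_real (1 / sqrt (2 * pi)) * fourier_laplace \<phi> a b (of_real \<omega>)"
proof -
  define f where "f = (\<lambda>t. exp (- \<i> * (of_real \<omega> * of_real t)) * of_real (\<phi> t))"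
  have "(\<lambda>t. exp (- \<i> * of_real (\<omega> * t)) * of_real (\<phi> t)) = (\<lambda>t. indicator {a..b} t *\<^sub>R f t)"
    using assms(2) by (auto simp: f_def indicator_def)
  moreover have "set_integrable lborel {a..b} f"
    unfolding f_def using assms(1) by (intro borel_integrable_atLeastAtMost' continuous_intros)
  ultimately have "(LINT t|lborel. exp (- \<i> * of_real (\<omega> * t)) * of_real (\<phi> t)) = integral {a..b} f"
    using set_borel_integral_eq_integral(2) by (simp add: set_lebesgue_integral_def)
  then show ?thesis by (simp add: inv_fourier_fun_def fourier_laplace_def f_def)
qed

lemma (in ksb_parameters) exp_minus_alpha:
  assumes "0 \<le> r"
  shows "continuous_on {z. 0 \<le> Im z} (\<lambda>z. exp (- alpha z * of_real r))"
    and "(\<lambda>z. exp (- alpha z * of_real r)) holomorphic_on {z. 0 < Im z}"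
    and "0 \<le> Im z \<Longrightarrow> norm (exp (- alpha z * of_real r)) \<le> 1"
proof -
  show "continuous_on {z. 0 \<le> Im z} (\<lambda>z. exp (- alpha z * of_real r))"
    by (intro continuous_on_exp continuous_on_mult continuous_on_minus alpha_continuous_on
        continuous_on_const)
  have "alpha holomorphic_on {z. 0 < Im z}"
    by (rule holomorphic_on_subset[OF alpha_holomorphic]) auto
  then show "(\<lambda>z. exp (- alpha z * of_real r)) holomorphic_on {z. 0 < Im z}"
    by (intro holomorphic_intros)
  show "norm (exp (- alpha z * of_real r)) \<le> 1" if "0 \<le> Im z"
    using Re_alpha_nonneg[OF that] assms by (simp add: mult_nonneg_nonneg)
qed

theorem theorem7:
  fixes c0 \<alpha>0 \<tau>0 \<gamma> :: real
  assumes "c0 > 0" and "\<alpha>0 > 0" and "\<tau>0 > 0" and "1 < \<gamma>" and "\<gamma> \<le> 2"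
  shows "\<forall>(x :: real^3) \<phi>. test_fun_neg \<phi> \<longrightarrow>
           integrable lborel
             (\<lambda>\<omega>. exp (- alpha_ksb c0 \<alpha>0 \<tau>0 \<gamma> \<omega> * of_real (norm x)) * inv_fourier_fun \<phi> \<omega>)
         \<and> of_real (1 / sqrt (2 * pi)) *
             inv_fourier_pair (\<lambda>\<omega>. exp (- alpha_ksb c0 \<alpha>0 \<tau>0 \<gamma> \<omega> * of_real (norm x))) \<phi> = 0"
proof (intro allI impI)
  fix x :: "real^3" and \<phi> :: "real \<Rightarrow> real"
  assume test_fun: "test_fun_neg \<phi>"
  then have smooth: "smooth_fun \<phi>" by (simp add: test_fun_neg_def)
  obtain a b where ab: "a < b" "b < 0"
    and outside: "\<And>t. t \<le> a \<or> b \<le> t \<Longrightarrow> \<phi> t = 0 \<and> deriv \<phi> t = 0"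
    using test_fun_neg_support[OF test_fun] by blast
  interpret ksb_parameters c0 \<alpha>0 \<tau>0 \<gamma> using assms by unfold_locales auto
  define F where "F z = exp (- alpha z * of_real (norm x))" for z
  have "continuous_on {a..b} \<phi>"
    using smooth_fun_derivatives(1)[OF smooth] by (intro continuous_at_imp_continuous_on ballI DERIV_isCont)
  moreover have "\<phi> t = 0" if "t \<notin> {a..b}" for t using that outside by auto
  ultimately have transform: "inv_fourier_fun \<phi> \<omega>
      = of_real (1 / sqrt (2 * pi)) * fourier_laplace \<phi> a b (of_real \<omega>)" for \<omega>
    by (rule inv_fourier_fun_eq_fourier_laplace)
  have pointwise: "exp (- alpha_ksb c0 \<alpha>0 \<tau>0 \<gamma> \<omega> * of_real (norm x)) * inv_fourier_fun \<phi> \<omega>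
      = of_real (1 / sqrt (2 * pi)) * (F (of_real \<omega>) * fourier_laplace \<phi> a b (of_real \<omega>))" for \<omega>
    by (simp add: transform F_def ksb_attenuation_of_real)
  have F: "continuous_on {z. 0 \<le> Im z} F" "F holomorphic_on {z. 0 < Im z}"
    "\<And>z. 0 \<le> Im z \<Longrightarrow> norm (F z) \<le> 1"
    unfolding F_def by (rule exp_minus_alpha[OF norm_ge_zero])+
  have "\<phi> a = 0" "deriv \<phi> a = 0" "\<phi> b = 0" "deriv \<phi> b = 0" using outside[of a] outside[of b] by auto
  note integral = bounded_times_fourier_laplace_integral_eq_0[OF F less_imp_le[OF ab(1)] ab(2)
      smooth_fun_derivatives[OF smooth] this]
  show "integrable lborel
        (\<lambda>\<omega>. exp (- alpha_ksb c0 \<alpha>0 \<tau>0 \<gamma> \<omega> * of_real (norm x)) * inv_fourier_fun \<phi> \<omega>)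
      \<and> of_real (1 / sqrt (2 * pi)) *
          inv_fourier_pair (\<lambda>\<omega>. exp (- alpha_ksb c0 \<alpha>0 \<tau>0 \<gamma> \<omega> * of_real (norm x))) \<phi> = 0"
    unfolding inv_fourier_pair_def pointwise using integral by simp
qed

end
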